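(* Let $N\ge 1$ and let $w=(w_1,\dots,w_{2N})$ be an original sequence with $N$ crossings, and let $\mathcal{C}\subset\mathbb{R}^N$ be its set of charge vectors (see context). Suppose there exist pairwise distinct indices $I_1,\dots,I_M\in\{1,\dots,N\}$, $M\ge 1$, forming a cyclic sequence of adjacent pairs: for every $k=1,\dots,M$ (with $I_{M+1}:=I_1$), the entry $(+,I_k)$ and the entry $(-,I_{k+1})$ occupy two consecutive positions of $w$, in either order. Let $\xi=\sum_{I=1}^N c_I e_I$ with all $c_I>0$. Then $\xi$ does not lie in the cone (set of all nonnegative linear combinations) generated by $\mathcal{C}\setminus\{e_{I_1},\dots,e_{I_M}\}$. Equivalently, every subset $S\subseteq\mathcal{C}$ with $\xi\in\mathrm{Cone}(S)$ contains $e_{I_k}$ for at least one $k\in\{1,\dots,M\}$.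
   Context: An original sequence with $N$ crossings is a word $w=(w_1,\dots,w_{2N})$ with $w_p=(s_p,I_p)$, $s_p\in\{+,-\}$, $I_p\in\{1,\dots,N\}$, such that for every $I\in\{1,\dots,N\}$ there is exactly one position $p$ with $w_p=(+,I)$ and exactly one position $p$ with $w_p=(-,I)$. Such a sequence arises from a $(1,1)$-tangle diagram with $N$ crossings by traversing the tangle from its incoming end to its outgoing end and recording, at each crossing $I$ passed, $+$ if the strand passes over and $-$ if it passes under. Let $e_1,\dots,e_N$ be the standard basis of $\mathbb{R}^N$, and set $\epsilon(+)=1$, $\epsilon(-)=-1$. For each position $p$ define $P(p)=-\epsilon(s_p)\sum_{r\ge p}\epsilon(s_r)\,e_{I_r}$ and $\overline{P}(p)=-\epsilon(s_p)\sum_{r\le p}\epsilon(s_r)\,e_{I_r}$. The set of charge vectors is $\mathcal{C}=\{e_1,\dots,e_N\}\cup\{P(p),\overline{P}(p): 1\le p\le 2N\}$. For a finite set $S\subset\mathbb{R}^N$, $\mathrm{Cone}(S)$ denotes the set of nonnegative linear combinations of elements of $S$. *)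

theory Defs
  imports Complex_Main
begin

text \<open>Vectors of R^N are represented as functions nat => real; the standard basis
  vector e_I is the indicator of I.  Only coordinates 1..N are ever nonzero.
  A sign is a bool: True = +, False = -.  Words are lists of length 2N,
  positions are 0-based (position p of the paper is list index p-1).\<close>

type_synonym letter = "bool \<times> nat"

definition ebasis :: "nat \<Rightarrow> nat \<Rightarrow> real" where
  "ebasis I = (\<lambda>j. if j = I then 1 else 0)"

definition eps :: "bool \<Rightarrow> real" where
  "eps s = (if s then 1 else -1)"

definition original_sequence :: "nat \<Rightarrow> letter list \<Rightarrow> bool" where
  "original_sequence N w \<longleftrightarrow>
     length w = 2 * N \<and>
     (\<forall>p < length w. snd (w ! p) \<in> {1..N}) \<and>
     (\<forall>I \<in> {1..N}. (\<exists>!p. p < length w \<and> w ! p = (True, I)) \<and>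
                   (\<exists>!p. p < length w \<and> w ! p = (False, I)))"

definition Pvec :: "letter list \<Rightarrow> nat \<Rightarrow> nat \<Rightarrow> real" where
  "Pvec w p = (\<lambda>j. - eps (fst (w ! p)) *
      (\<Sum>r\<in>{p..<length w}. eps (fst (w ! r)) * ebasis (snd (w ! r)) j))"

definition Pbarvec :: "letter list \<Rightarrow> nat \<Rightarrow> nat \<Rightarrow> real" where
  "Pbarvec w p = (\<lambda>j. - eps (fst (w ! p)) *
      (\<Sum>r\<in>{0..p}. eps (fst (w ! r)) * ebasis (snd (w ! r)) j))"

definition charges :: "nat \<Rightarrow> letter list \<Rightarrow> (nat \<Rightarrow> real) set" where
  "charges N w = ebasis ` {1..N} \<union> Pvec w ` {..<length w} \<union> Pbarvec w ` {..<length w}"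

definition Cone :: "(nat \<Rightarrow> real) set \<Rightarrow> (nat \<Rightarrow> real) set" where
  "Cone S = {x. \<exists>c. (\<forall>v\<in>S. 0 \<le> c v) \<and> x = (\<lambda>j. \<Sum>v\<in>S. c v * v j)}"

end

theory Submission
  imports Defs
begin

text \<open>The functional \<open>\<phi>(v) = \<Sum>\<^sub>k v(I\<^sub>k)\<close> separates \<open>\<xi>\<close> from the cone: \<open>\<phi>(\<xi>) = \<Sum>\<^sub>k c(I\<^sub>k) > 0\<close>,
  while \<open>\<phi> \<le> 0\<close> on every remaining charge vector.  For a basis vector \<open>e\<^sub>J\<close> with \<open>J\<close> off the
  cycle, \<open>\<phi>(e\<^sub>J) = 0\<close>.  For \<open>P(p)\<close> and \<open>Pbar(p)\<close>, evaluating a partial signed sum of letters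
  at \<open>I\<^sub>k\<close> counts the over-crossing of \<open>I\<^sub>k\<close> minus its under-crossing; re-indexing the under-crossings
  along the cycle pairs the over-crossing of \<open>I\<^sub>k\<close> with the adjacent under-crossing of \<open>I\<^sub>k\<^sub>+\<^sub>1\<close>.
  An interval with endpoint \<open>p\<close> can separate such an adjacent pair only when \<open>p\<close> is one of the
  two, and then the sign \<open>-\<epsilon>(s\<^sub>p)\<close> makes the contribution nonpositive.\<close>

definition letter_pos :: "letter list \<Rightarrow> bool \<Rightarrow> nat \<Rightarrow> nat" where
  "letter_pos w s J = (THE p. p < length w \<and> w ! p = (s, J))"

lemma original_sequence_ex1_pos:
  assumes "original_sequence N w" "J \<in> {1..N}"
  shows "\<exists>!p. p < length w \<and> w ! p = (s, J)"
proof -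
  have "(\<exists>!p. p < length w \<and> w ! p = (True, J)) \<and> (\<exists>!p. p < length w \<and> w ! p = (False, J))"
    using assms unfolding original_sequence_def by blast
  then show ?thesis by (cases s) simp_all
qed

lemma letter_pos:
  assumes "original_sequence N w" "J \<in> {1..N}"
  shows "letter_pos w s J < length w" "w ! letter_pos w s J = (s, J)"
  using theI'[OF original_sequence_ex1_pos[OF assms, of s]]
  unfolding letter_pos_def by auto

lemma letter_pos_unique:
  assumes "original_sequence N w" "J \<in> {1..N}" "q < length w" "w ! q = (s, J)"
  shows "letter_pos w s J = q"
  unfolding letter_pos_def
  using original_sequence_ex1_pos[OF assms(1,2)] assms(3,4) by (blast intro: the1_equality)

lemma signed_letter_coord:
  assumes "original_sequence N w" "J \<in> {1..N}" "r < length w"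
  shows "eps (fst (w ! r)) * ebasis (snd (w ! r)) J =
    of_bool (r = letter_pos w True J) - of_bool (r = letter_pos w False J)"
proof -
  obtain s J' where r: "w ! r = (s, J')" by (cases "w ! r")
  have "letter_pos w s J = r" if "J' = J"
    using letter_pos_unique[OF assms] r that by simp
  moreover have "letter_pos w (\<not> s) J \<noteq> r"
    using letter_pos(2)[OF assms(1,2), of "\<not> s"] r by auto
  ultimately show ?thesis
    using r letter_pos(2)[OF assms(1,2)] by (cases s) (auto simp: eps_def ebasis_def)
qed

lemma signed_letter_sum:
  assumes "original_sequence N w" "J \<in> {1..N}" "R \<subseteq> {..<length w}"
  shows "(\<Sum>r\<in>R. eps (fst (w ! r)) * ebasis (snd (w ! r)) J) =
    of_bool (letter_pos w True J \<in> R) - of_bool (letter_pos w False J \<in> R)"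
proof -
  have "finite R" using assms(3) finite_subset by blast
  moreover have "(\<Sum>r\<in>R. eps (fst (w ! r)) * ebasis (snd (w ! r)) J) =
      (\<Sum>r\<in>R. of_bool (r = letter_pos w True J) - of_bool (r = letter_pos w False J))"
    using assms by (intro sum.cong refl signed_letter_coord) auto
  ultimately show ?thesis
    by (simp add: sum_subtractf of_bool_def sum.delta')
qed

lemma sum_lessThan_rotate:
  assumes "M \<ge> (1::nat)"
  shows "(\<Sum>k<M. f ((k + 1) mod M)) = (\<Sum>k<M. f k)"
proof -
  obtain m where M: "M = Suc m" using assms by (cases M) auto
  have "(\<Sum>k<m. f ((k + 1) mod M)) = (\<Sum>k<m. f (Suc k))"
    unfolding M by (intro sum.cong) auto
  then show ?thesis
    unfolding M sum.lessThan_Suc_shift[of f] by (simp add: M add.commute)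
qed

lemma adjacent_letters_pos:
  assumes "original_sequence N w" "J \<in> {1..N}" "J' \<in> {1..N}"
    and "p + 1 < length w"
    and "(w ! p = (True, J) \<and> w ! (p + 1) = (False, J')) \<or>
         (w ! p = (False, J') \<and> w ! (p + 1) = (True, J))"
  shows "letter_pos w False J' = letter_pos w True J + 1 \<or>
         letter_pos w True J = letter_pos w False J' + 1"
  using assms(5) letter_pos_unique[OF assms(1,2)] letter_pos_unique[OF assms(1,3)] assms(4)
  by (metis Suc_eq_plus1 Suc_lessD)

lemma adjacent_pair_boundary_sign:
  assumes "b = a + 1 \<or> a = b + 1" "fst (w ! a)" "\<not> fst (w ! b)"
    and "R = {p..<L} \<or> R = {0..p}" "a < L" "b < L"
  shows "- eps (fst (w ! p)) * (of_bool (a \<in> R) - of_bool (b \<in> R)) \<le> 0"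
  using assms by (cases "p = a"; cases "p = b") (auto simp: eps_def)

lemma cone_coord_sum_nonpos:
  assumes "\<forall>v\<in>S. (\<Sum>k\<in>K. v k) \<le> 0" "x \<in> Cone S"
  shows "(\<Sum>k\<in>K. x k) \<le> (0::real)"
proof -
  obtain a where a: "\<forall>v\<in>S. 0 \<le> a v" "x = (\<lambda>j. \<Sum>v\<in>S. a v * v j)"
    using assms(2) unfolding Cone_def by blast
  have "(\<Sum>k\<in>K. x k) = (\<Sum>v\<in>S. a v * (\<Sum>k\<in>K. v k))"
    unfolding a(2) by (simp add: sum_distrib_left sum.swap[of _ K])
  also have "\<dots> \<le> 0"
    using a(1) assms(1) by (intro sum_nonpos) (simp add: mult_nonneg_nonpos)
  finally show ?thesis .
qed

lemma sum_ebasis_coord: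
  assumes "finite A" "J \<in> A"
  shows "(\<Sum>J'\<in>A. c J' * ebasis J' J) = c J"
proof -
  have "(\<Sum>J'\<in>A. c J' * ebasis J' J) = (\<Sum>J'\<in>A. if J = J' then c J' else 0)"
    by (intro sum.cong) (auto simp: ebasis_def)
  then show ?thesis using assms by simp
qed

lemma cycle_signed_sum_nonpos:
  fixes N M :: nat and w :: "letter list" and I :: "nat \<Rightarrow> nat"
  assumes "original_sequence N w" "M \<ge> 1" "\<forall>k<M. I k \<in> {1..N}"
    and "\<forall>k<M. \<exists>p. p + 1 < length w \<and>
           ((w ! p = (True, I k) \<and> w ! (p + 1) = (False, I ((k + 1) mod M))) \<or>
            (w ! p = (False, I ((k + 1) mod M)) \<and> w ! (p + 1) = (True, I k)))"
    and "p < length w" "R = {p..<length w} \<or> R = {0..p}"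
  shows "(\<Sum>k<M. - eps (fst (w ! p)) *
           (\<Sum>r\<in>R. eps (fst (w ! r)) * ebasis (snd (w ! r)) (I k))) \<le> 0"
proof -
  define a where "a k = letter_pos w True (I k)" for k
  define b where "b k = letter_pos w False (I ((k + 1) mod M))" for k
  have I_cycle: "I ((k + 1) mod M) \<in> {1..N}" for k
    using assms(2,3) by simp
  have "R \<subseteq> {..<length w}" using assms(5,6) by auto
  then have "(\<Sum>k<M. \<Sum>r\<in>R. eps (fst (w ! r)) * ebasis (snd (w ! r)) (I k)) =
      (\<Sum>k<M. of_bool (a k \<in> R)) - (\<Sum>k<M. of_bool (letter_pos w False (I k) \<in> R))"
    using assms(1,3) unfolding a_def by (simp add: signed_letter_sum sum_subtractf)
  also have "\<dots> = (\<Sum>k<M. of_bool (a k \<in> R) - of_bool (b k \<in> R))"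
    unfolding b_def
    using sum_lessThan_rotate[OF assms(2), of "\<lambda>k. of_bool (letter_pos w False (I k) \<in> R) :: real"]
    by (simp add: sum_subtractf)
  finally have "(\<Sum>k<M. - eps (fst (w ! p)) *
         (\<Sum>r\<in>R. eps (fst (w ! r)) * ebasis (snd (w ! r)) (I k))) =
      (\<Sum>k<M. - eps (fst (w ! p)) * (of_bool (a k \<in> R) - of_bool (b k \<in> R)))"
    by (simp add: sum_negf sum_distrib_left[symmetric])
  also have "\<dots> \<le> 0"
  proof (rule sum_nonpos)
    fix k assume "k \<in> {..<M}"
    then have k: "I k \<in> {1..N}" using assms(3) by simp
    have "b k = a k + 1 \<or> a k = b k + 1"
      using \<open>k \<in> {..<M}\<close> assms(4) adjacent_letters_pos[OF assms(1) k I_cycle]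
      unfolding a_def b_def by blast
    then show "- eps (fst (w ! p)) * (of_bool (a k \<in> R) - of_bool (b k \<in> R)) \<le> 0"
      using adjacent_pair_boundary_sign assms(6) letter_pos[OF assms(1) k] letter_pos[OF assms(1) I_cycle]
      unfolding a_def b_def by (metis fst_conv)
  qed
  finally show ?thesis .
qed

lemma cycle_sum_nonpos_on_charges:
  fixes N M :: nat and w :: "letter list" and I :: "nat \<Rightarrow> nat"
  assumes "original_sequence N w" "M \<ge> 1" "\<forall>k<M. I k \<in> {1..N}"
    and "\<forall>k<M. \<exists>p. p + 1 < length w \<and>
           ((w ! p = (True, I k) \<and> w ! (p + 1) = (False, I ((k + 1) mod M))) \<or>
            (w ! p = (False, I ((k + 1) mod M)) \<and> w ! (p + 1) = (True, I k)))"
    and "v \<in> charges N w - ebasis ` I ` {..<M}"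
  shows "(\<Sum>k<M. v (I k)) \<le> 0"
proof -
  consider J where "v = ebasis J" "\<forall>k<M. J \<noteq> I k"
    | p where "p < length w" "v = Pvec w p" | p where "p < length w" "v = Pbarvec w p"
    using assms(5) unfolding charges_def by blast
  then show ?thesis
  proof cases
    case 1
    then have "(\<Sum>k<M. v (I k)) = 0" by (intro sum.neutral) (auto simp: ebasis_def)
    then show ?thesis by simp
  next
    case 2
    then show ?thesis
      using cycle_signed_sum_nonpos[OF assms(1-4), of p "{p..<length w}"] by (simp add: Pvec_def)
  next
    case 3
    then show ?thesis
      using cycle_signed_sum_nonpos[OF assms(1-4), of p "{0..p}"] by (simp add: Pbarvec_def)
  qed
qed

theorem proposition3p1:
  fixes N M :: nat and w :: "letter list" and I :: "nat \<Rightarrow> nat" and c :: "nat \<Rightarrow> real"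
  assumes "N \<ge> 1"
    and "original_sequence N w"
    and "M \<ge> 1"
    and "\<forall>k<M. I k \<in> {1..N}"
    and "inj_on I {..<M}"
    and "\<forall>k<M. \<exists>p. p + 1 < length w \<and>
           ((w ! p = (True, I k) \<and> w ! (p + 1) = (False, I ((k + 1) mod M))) \<or>
            (w ! p = (False, I ((k + 1) mod M)) \<and> w ! (p + 1) = (True, I k)))"
    and "\<forall>J\<in>{1..N}. c J > 0"
  shows "(\<lambda>j. \<Sum>J\<in>{1..N}. c J * ebasis J j) \<notin>
           Cone (charges N w - ebasis ` I ` {..<M})"
proof
  let ?\<xi> = "\<lambda>j. \<Sum>J\<in>{1..N}. c J * ebasis J j"
  have sum_cycle: "(\<Sum>j\<in>I ` {..<M}. v j) = (\<Sum>k<M. v (I k))" for v :: "nat \<Rightarrow> real"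
    using assms(5) by (simp add: sum.reindex)
  assume "?\<xi> \<in> Cone (charges N w - ebasis ` I ` {..<M})"
  then have "(\<Sum>k<M. ?\<xi> (I k)) \<le> 0"
    using cone_coord_sum_nonpos[of _ "I ` {..<M}"]
      cycle_sum_nonpos_on_charges[OF assms(2,3,4,6)] unfolding sum_cycle by blast
  moreover have "(\<Sum>k<M. ?\<xi> (I k)) = (\<Sum>k<M. c (I k))"
    using assms(4) by (intro sum.cong refl) (simp add: sum_ebasis_coord)
  moreover have "(\<Sum>k<M. c (I k)) > 0"
    using assms(3,4,7) by (intro sum_pos) (auto simp: lessThan_empty_iff)
  ultimately show False by simp
qed

end
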